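(* Let $n\ge2$ be an integer, $j$ a positive integer, $\lambda\in\mathbb{R}$ with $\lambda\ge\frac{(n-1)j}{2}$, and set $\alpha=1-\frac1n$, $\beta=\frac12(1-\frac1n)-\frac{\lambda}{jn}$. Define $\mathcal{G}(z)=e^{jz^n/2}\,\mathcal{M}(\beta,\alpha,-jz^n)$ and $\mathcal{D}(z)=e^{jz^n/2}\,\mathcal{T}(\beta,\alpha,-jz^n)$ for $z>0$. Then the Wronskian $\mathcal{G}(z)\mathcal{D}'(z)-\mathcal{G}'(z)\mathcal{D}(z)$ is constant, equal to $\frac{\Gamma(\alpha-1)}{\Gamma(\alpha-\beta)}\,j^{1/n}$.
   Context: $(x)_k=\prod_{m=1}^k(x+m-1)$, $(x)_0=1$. Kummer's function: $\mathcal{M}(\beta,\alpha,y)=\sum_{k\ge0}\frac{(\beta)_k}{(\alpha)_k}\frac{y^k}{k!}$. For $y<0$ and $\alpha>\beta$: $\mathcal{T}(\beta,\alpha,y)=\frac{e^y}{\Gamma(\alpha-\beta)}\int_0^\infty e^{yt}t^{\alpha-\beta-1}(1+t)^{\beta-1}\,dt$. *)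

theory Defs
  imports "HOL-Analysis.Analysis"
begin

definition kummerM :: "real \<Rightarrow> real \<Rightarrow> real \<Rightarrow> real" where
  "kummerM b a y = (\<Sum>k. pochhammer b k / pochhammer a k * y ^ k / fact k)"

text \<open>The integral function T(beta, alpha, y) (meant for y < 0, alpha > beta).\<close>
definition kummerT :: "real \<Rightarrow> real \<Rightarrow> real \<Rightarrow> real" where
  "kummerT b a y = exp y / Gamma (a - b) *
     integral {0<..} (\<lambda>t. exp (y * t) * t powr (a - b - 1) * (1 + t) powr (b - 1))"

end

theory Submission
  imports Defs "HOL-Real_Asymp.Real_Asymp"
begin

text \<open>Both M(y) = M(\<beta>, \<alpha>, y) and T(y) = T(\<beta>, \<alpha>, y) solve Kummer's equation
  y w'' + (\<alpha> - y) w' = \<beta> w on y < 0: for M this is the recurrence of its coefficients, for T it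
  follows by differentiating under the integral sign and integrating by parts. By Abel's identity
  (-y)^\<alpha> e^{-y} (M T' - M' T) is constant, and the constant \<Gamma>(\<alpha>)/\<Gamma>(\<alpha> - \<beta>) is read off
  as y \<rightarrow> 0-, where M \<rightarrow> 1, (-y)^\<alpha> T \<rightarrow> 0 and (-y)^\<alpha> T' \<rightarrow> \<Gamma>(\<alpha>)/\<Gamma>(\<alpha> - \<beta>).
  The substitution y = -j z^n multiplies the Wronskian by e^{j z^n} (-n j z^{n-1}); for
  \<alpha> = 1 - 1/n this leaves -n \<Gamma>(\<alpha>) j^{1/n}/\<Gamma>(\<alpha> - \<beta>), and -n \<Gamma>(\<alpha>) = \<Gamma>(\<alpha> - 1).\<close>

section \<open>Integrals over (0, \<infinity>) and power inequalities\<close>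

lemma Gamma_integral_real_scaled:
  fixes c x :: real
  assumes c: "c > 0" and x: "x > 0"
  shows "((\<lambda>t. t powr (c - 1) * exp (- x * t)) has_integral Gamma c / x powr c) {0<..}"
proof -
  have "((\<lambda>t. t powr (c - 1) / exp t) has_integral Gamma c) {0..}"
    by (rule Gamma_integral_real[OF c])
  then have "((\<lambda>t. if t \<in> {0<..} then t powr (c - 1) / exp t else 0) has_integral Gamma c) {0..}"
    by (rule has_integral_spike [of "{0}", rotated 2]) auto
  then have Gamma: "((\<lambda>t. t powr (c - 1) / exp t) has_integral Gamma c) {0<..}"
    by (subst (asm) has_integral_restrict) auto
  have abs_int: "(\<lambda>t. t powr (c - 1) / exp t) absolutely_integrable_on {0<..}"
    using Gamma by (intro nonnegative_absolutely_integrable_1) (auto simp: has_integral_integrable)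
  have image: "(\<lambda>s. x * s) ` {0<..} = {0<..}"
  proof (intro equalityI subsetI)
    fix t :: real assume "t \<in> {0<..}"
    then show "t \<in> (\<lambda>s. x * s) ` {0<..}" using x by (intro image_eqI[of _ _ "t / x"]) auto
  qed (use x in auto)
  have "(\<lambda>s. \<bar>x\<bar> * ((x * s) powr (c - 1) / exp (x * s))) absolutely_integrable_on {0<..} \<and>
        integral {0<..} (\<lambda>s. \<bar>x\<bar> * ((x * s) powr (c - 1) / exp (x * s))) = Gamma c"
    using abs_int Gamma x image
    by (subst has_absolute_integral_change_of_variables_1'[of "{0<..}" "\<lambda>s. x * s" "\<lambda>_. x"])
       (auto intro!: derivative_eq_intros inj_onI simp: integral_unique)
  then have "((\<lambda>s. \<bar>x\<bar> * ((x * s) powr (c - 1) / exp (x * s))) has_integral Gamma c) {0<..}"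
    using set_lebesgue_integral_eq_integral(1) has_integral_integral by metis
  then have "((\<lambda>s. \<bar>x\<bar> * ((x * s) powr (c - 1) / exp (x * s)) / x powr c) has_integral Gamma c / x powr c) {0<..}"
    by (rule has_integral_divide)
  moreover have "\<bar>x\<bar> * ((x * s) powr (c - 1) / exp (x * s)) / x powr c = s powr (c - 1) * exp (- x * s)"
    if "s \<in> {0<..}" for s
  proof -
    have "(x * s) powr (c - 1) = x powr (c - 1) * s powr (c - 1)" using x that by (simp add: powr_mult)
    moreover have "x powr c = x * x powr (c - 1)" using x by (simp add: powr_diff)
    ultimately show ?thesis using x by (simp add: exp_minus field_simps)
  qed
  ultimately show ?thesis
    by (subst has_integral_cong[symmetric]) auto
qed

lemma has_integral_greaterThan_0_FTC:
  fixes F f :: "real \<Rightarrow> real"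
  assumes F: "\<And>t. t > 0 \<Longrightarrow> (F has_real_derivative f t) (at t)"
    and cont: "continuous_on {0<..} f" and f: "f absolutely_integrable_on {0<..}"
    and A: "(F \<longlongrightarrow> A) (at_right 0)" and B: "(F \<longlongrightarrow> B) at_top"
  shows "(f has_integral B - A) {0<..}"
proof -
  have "(\<lambda>t. indicator {0<..} t *\<^sub>R f t) \<in> borel_measurable lborel"
    using borel_measurable_continuous_on_indicator[OF _ cont] by simp
  then have f_lborel: "set_integrable lborel {0<..} f"
    using f integrable_completion unfolding set_integrable_def by blast
  have "(LBINT t=0..\<infinity>. f t) = B - A"
  proof (rule interval_integral_FTC_integrable)
    show "(F has_vector_derivative f t) (at t)" if "0 < ereal t" for t
      using F[of t] that by (simp add: has_real_derivative_iff_has_vector_derivative zero_ereal_def)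
    show "isCont f t" if "0 < ereal t" for t
      using cont that by (simp add: continuous_on_eq_continuous_at zero_ereal_def)
    show "((F \<circ> real_of_ereal) \<longlongrightarrow> A) (at_right 0)"
      using A unfolding zero_ereal_def ereal_tendsto_simps1 .
    show "((F \<circ> real_of_ereal) \<longlongrightarrow> B) (at_left \<infinity>)"
      using B unfolding ereal_tendsto_simps1 .
  qed (use f_lborel in \<open>auto simp: einterval_def zero_ereal_def greaterThan_def\<close>)
  then show ?thesis
    using set_borel_integral_eq_integral[OF f_lborel]
    by (simp add: interval_lebesgue_integral_0_infty has_integral_iff)
qed

lemma has_real_derivative_integral_dominated:
  fixes f f' :: "real \<Rightarrow> 'a::euclidean_space \<Rightarrow> real"
  assumes "d > 0"
    and f: "\<And>u. u \<in> ball y d \<Longrightarrow> f u integrable_on S"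
    and f': "\<And>u t. u \<in> ball y d \<Longrightarrow> t \<in> S \<Longrightarrow> ((\<lambda>u. f u t) has_real_derivative f' u t) (at u)"
    and bound: "\<And>u t. u \<in> ball y d \<Longrightarrow> t \<in> S \<Longrightarrow> \<bar>f' u t\<bar> \<le> h t"
    and h: "h integrable_on S"
  shows "((\<lambda>u. integral S (f u)) has_real_derivative integral S (f' y)) (at y)"
proof -
  have quotient_lim: "(\<lambda>i. (integral S (f (X i)) - integral S (f y)) / (X i - y)) \<longlonglongrightarrow> integral S (f' y)"
    if X: "\<And>i. X i \<in> ball y d - {y}" "X \<longlonglongrightarrow> y" for X
  proof -
    define q where "q i t = (f (X i) t - f y t) / (X i - y)" for i t
    have y: "y \<in> ball y d" using \<open>d > 0\<close> by simp
    have "q i integrable_on S" for i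
      unfolding q_def using X(1) y by (intro integrable_on_divide integrable_diff f) auto
    moreover have "\<bar>q i t\<bar> \<le> h t" if "t \<in> S" for i t
    proof -
      have "norm (f (X i) t - f y t) \<le> h t * norm (X i - y)"
      proof (rule field_differentiable_bound[of "ball y d" "\<lambda>u. f u t" "\<lambda>u. f' u t"])
        show "((\<lambda>u. f u t) has_field_derivative f' u t) (at u within ball y d)" if "u \<in> ball y d" for u
          using f'[OF that \<open>t \<in> S\<close>] by (rule has_field_derivative_at_within)
      qed (use X(1)[of i] y bound \<open>t \<in> S\<close> in auto)
      then show ?thesis using X(1)[of i] by (simp add: q_def abs_divide divide_le_eq)
    qed
    moreover have "(\<lambda>i. q i t) \<longlonglongrightarrow> f' y t" if "t \<in> S" for t
    proof -
      have "((\<lambda>u. (f u t - f y t) / (u - y)) \<longlongrightarrow> f' y t) (at y)"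
        using f'[OF y that] by (simp add: has_field_derivative_iff)
      then show ?thesis
        unfolding tendsto_at_iff_sequentially q_def comp_def using X by auto
    qed
    ultimately have "(\<lambda>i. integral S (q i)) \<longlonglongrightarrow> integral S (f' y)"
      by (intro dominated_convergence(2)[OF _ h]) auto
    moreover have "integral S (q i) = (integral S (f (X i)) - integral S (f y)) / (X i - y)" for i
      unfolding q_def using X(1) y by (simp add: integral_diff f)
    ultimately show ?thesis by simp
  qed
  have "((\<lambda>u. (integral S (f u) - integral S (f y)) / (u - y)) \<longlongrightarrow> integral S (f' y)) (at y within ball y d)"
    unfolding tendsto_at_iff_sequentially comp_def using quotient_lim by simp
  then show ?thesis
    using \<open>d > 0\<close> at_within_open[of y "ball y d"] by (simp add: has_field_derivative_iff)
qed

lemma one_plus_powr_le_powr: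
  fixes a b t :: real
  assumes "a \<le> b" "b \<le> 0" "t > 0"
  shows "(1 + t) powr a \<le> t powr b"
proof (cases "t \<le> 1")
  case True
  have "(1 + t) powr a \<le> (1 + t) powr 0"
    using assms by (intro powr_mono) auto
  also have "\<dots> = t powr 0"
    using assms by simp
  also have "\<dots> \<le> t powr b"
    using True assms by (intro powr_mono') auto
  finally show ?thesis .
next
  case False
  have "(1 + t) powr a \<le> t powr a"
    using assms by (intro powr_mono2') auto
  also have "\<dots> \<le> t powr b"
    using False assms by (intro powr_mono) auto
  finally show ?thesis .
qed

lemma powr_diff_one_plus_powr_le:
  fixes a b t :: real
  assumes "a \<le> -1" "a - 1 \<le> b" "b \<le> a" "t > 0"
  shows "t powr a - (1 + t) powr a \<le> - a * t powr b"
proof (cases "t \<le> 1")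
  case True
  have "t powr a \<le> t powr b"
    using True assms by (intro powr_mono') auto
  then have "t powr a - (1 + t) powr a \<le> t powr b"
    using powr_ge_zero[of "1 + t" a] by linarith
  also have "\<dots> \<le> - a * t powr b"
    using assms mult_right_mono[of 1 "- a" "t powr b"] by simp
  finally show ?thesis .
next
  case False
  have "norm (t powr a - (1 + t) powr a) \<le> (- a * t powr (a - 1)) * norm (t - (1 + t))"
  proof (rule field_differentiable_bound[of "{t..1 + t}" "\<lambda>s. s powr a" "\<lambda>s. a * s powr (a - 1)"])
    show "((\<lambda>s. s powr a) has_field_derivative a * s powr (a - 1)) (at s within {t..1 + t})"
      if "s \<in> {t..1 + t}" for s
      using that assms by (intro has_field_derivative_at_within[OF has_real_derivative_powr]) auto
    show "norm (a * s powr (a - 1)) \<le> - a * t powr (a - 1)" if "s \<in> {t..1 + t}" for s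
    proof -
      have "norm (a * s powr (a - 1)) = - a * s powr (a - 1)"
        using assms by (simp add: abs_mult)
      also have "\<dots> \<le> - a * t powr (a - 1)"
        using that assms by (intro mult_left_mono powr_mono2') auto
      finally show ?thesis .
    qed
  qed (use assms in auto)
  then have "t powr a - (1 + t) powr a \<le> - a * t powr (a - 1)"
    by simp
  also have "\<dots> \<le> - a * t powr b"
    using False assms by (intro mult_left_mono powr_mono) auto
  finally show ?thesis .
qed

lemma powr_mult_divide_powr_half:
  fixes x a c :: real
  assumes "x > 0"
  shows "x powr a * (c / x powr (a / 2)) = c * x powr (a / 2)"
proof -
  have "x powr a = x powr (a / 2) * x powr (a / 2)"
    by (simp add: powr_add[symmetric])
  then show ?thesis
    using assms by simp
qed

section \<open>Kummer's series\<close>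

definition kummer_coeff :: "real \<Rightarrow> real \<Rightarrow> nat \<Rightarrow> real" where
  "kummer_coeff \<beta> \<alpha> k = pochhammer \<beta> k / pochhammer \<alpha> k / fact k"

definition kummerM' :: "real \<Rightarrow> real \<Rightarrow> real \<Rightarrow> real" where
  "kummerM' \<beta> \<alpha> y = (\<Sum>k. diffs (kummer_coeff \<beta> \<alpha>) k * y ^ k)"

definition kummerM'' :: "real \<Rightarrow> real \<Rightarrow> real \<Rightarrow> real" where
  "kummerM'' \<beta> \<alpha> y = (\<Sum>k. diffs (diffs (kummer_coeff \<beta> \<alpha>)) k * y ^ k)"

lemma kummerM_eq_powser: "kummerM \<beta> \<alpha> y = (\<Sum>k. kummer_coeff \<beta> \<alpha> k * y ^ k)"
  by (simp add: kummerM_def kummer_coeff_def field_simps)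

lemma kummerM_at_0: "kummerM \<beta> \<alpha> 0 = 1"
  unfolding kummerM_eq_powser powser_zero by (simp add: kummer_coeff_def)

lemma kummer_coeff_recurrence:
  fixes \<alpha> \<beta> :: real
  assumes "\<alpha> > 0"
  shows "(\<alpha> + k) * Suc k * kummer_coeff \<beta> \<alpha> (Suc k) = (\<beta> + k) * kummer_coeff \<beta> \<alpha> k"
proof -
  have "pochhammer \<alpha> k > 0" "\<alpha> + k > 0"
    using assms by (simp_all add: pochhammer_pos)
  then have "kummer_coeff \<beta> \<alpha> (Suc k) = kummer_coeff \<beta> \<alpha> k * (\<beta> + k) / ((\<alpha> + k) * Suc k)"
    unfolding kummer_coeff_def pochhammer_Suc fact_Suc by (simp add: field_simps)
  moreover have "(\<alpha> + k) * Suc k \<noteq> 0"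
    using assms by (simp add: add_pos_nonneg)
  ultimately show ?thesis
    by (simp add: mult.commute)
qed

lemma summable_kummer_coeff:
  fixes \<alpha> \<beta> y :: real
  assumes "\<alpha> > 0"
  shows "summable (\<lambda>k. kummer_coeff \<beta> \<alpha> k * y ^ k)"
proof (rule summable_ratio_test[where c = "1 / 2" and N = "nat \<lceil>2 * (\<bar>\<beta>\<bar> + 1) * \<bar>y\<bar>\<rceil>"])
  fix n assume "nat \<lceil>2 * (\<bar>\<beta>\<bar> + 1) * \<bar>y\<bar>\<rceil> \<le> n"
  then have n: "2 * (\<bar>\<beta>\<bar> + 1) * \<bar>y\<bar> \<le> n"
    by linarith
  have "\<bar>\<beta> + n\<bar> \<le> (\<bar>\<beta>\<bar> + 1) * (real n + 1)"
    by (simp add: algebra_simps abs_triangle_ineq[THEN order_trans])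
  then have "2 * \<bar>\<beta> + n\<bar> * \<bar>y\<bar> \<le> 2 * ((\<bar>\<beta>\<bar> + 1) * (real n + 1)) * \<bar>y\<bar>"
    by (intro mult_right_mono mult_left_mono) auto
  also have "\<dots> = 2 * (\<bar>\<beta>\<bar> + 1) * \<bar>y\<bar> * (real n + 1)"
    by (simp add: algebra_simps)
  also have "\<dots> \<le> real n * (real n + 1)"
    using n by (intro mult_right_mono) auto
  also have "\<dots> \<le> (\<alpha> + n) * (real n + 1)"
    using assms by (intro mult_right_mono) auto
  finally have ratio: "2 * \<bar>\<beta> + n\<bar> * \<bar>y\<bar> \<le> (\<alpha> + n) * (real n + 1)" .
  let ?c = "kummer_coeff \<beta> \<alpha>"
  have "(\<alpha> + n) * (real n + 1) * norm (?c (Suc n) * y ^ Suc n)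
      = \<bar>(\<alpha> + n) * Suc n * ?c (Suc n)\<bar> * \<bar>y ^ Suc n\<bar>"
    using assms by (simp add: abs_mult add_pos_nonneg)
  also have "\<dots> = \<bar>\<beta> + n\<bar> * \<bar>y\<bar> * norm (?c n * y ^ n)"
    unfolding kummer_coeff_recurrence[OF assms] by (simp add: abs_mult)
  also have "\<dots> \<le> (\<alpha> + n) * (real n + 1) / 2 * norm (?c n * y ^ n)"
    using ratio by (intro mult_right_mono) auto
  finally have "(\<alpha> + n) * (real n + 1) * norm (?c (Suc n) * y ^ Suc n)
      \<le> (\<alpha> + n) * (real n + 1) * (1 / 2 * norm (?c n * y ^ n))"
    by (simp add: ac_simps)
  then show "norm (?c (Suc n) * y ^ Suc n) \<le> 1 / 2 * norm (?c n * y ^ n)"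
    using assms by (simp add: mult_le_cancel_left_pos add_pos_nonneg)
qed simp

lemma has_real_derivative_kummerM:
  "\<alpha> > 0 \<Longrightarrow> (kummerM \<beta> \<alpha> has_real_derivative kummerM' \<beta> \<alpha> y) (at y)"
  unfolding kummerM_eq_powser[abs_def] kummerM'_def
  by (rule termdiffs_strong_converges_everywhere[OF summable_kummer_coeff])

lemma has_real_derivative_kummerM':
  "\<alpha> > 0 \<Longrightarrow> (kummerM' \<beta> \<alpha> has_real_derivative kummerM'' \<beta> \<alpha> y) (at y)"
  unfolding kummerM'_def[abs_def] kummerM''_def
  by (intro termdiffs_strong_converges_everywhere termdiff_converges_all summable_kummer_coeff)

lemma diffs_powser_times_x_sums:
  fixes a :: "nat \<Rightarrow> real"
  assumes "(\<lambda>k. diffs a k * y ^ k) sums s"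
  shows "(\<lambda>k. k * a k * y ^ k) sums (y * s)"
proof -
  have "(\<lambda>k. (\<lambda>m. m * a m * y ^ m) (Suc k)) sums (y * s)"
    using sums_mult[OF assms, of y] by (simp add: diffs_def algebra_simps)
  then show ?thesis
    by (subst (asm) sums_Suc_iff) simp
qed

lemma kummerM_ode:
  fixes \<alpha> \<beta> y :: real
  assumes "\<alpha> > 0"
  shows "y * kummerM'' \<beta> \<alpha> y + (\<alpha> - y) * kummerM' \<beta> \<alpha> y = \<beta> * kummerM \<beta> \<alpha> y"
proof -
  let ?c = "kummer_coeff \<beta> \<alpha>"
  let ?d = "diffs ?c"
  have M: "(\<lambda>k. ?c k * y ^ k) sums kummerM \<beta> \<alpha> y"
    unfolding kummerM_eq_powser using summable_kummer_coeff[OF assms] by (rule summable_sums)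
  have M': "(\<lambda>k. ?d k * y ^ k) sums kummerM' \<beta> \<alpha> y"
    unfolding kummerM'_def using summable_kummer_coeff[OF assms]
    by (intro summable_sums termdiff_converges_all)
  have M'': "(\<lambda>k. diffs ?d k * y ^ k) sums kummerM'' \<beta> \<alpha> y"
    unfolding kummerM''_def using summable_kummer_coeff[OF assms]
    by (intro summable_sums termdiff_converges_all)
  have "(\<lambda>k. (k * ?d k * y ^ k + \<alpha> * (?d k * y ^ k)) - (k * ?c k * y ^ k + \<beta> * (?c k * y ^ k)))
      sums ((y * kummerM'' \<beta> \<alpha> y + \<alpha> * kummerM' \<beta> \<alpha> y) - (y * kummerM' \<beta> \<alpha> y + \<beta> * kummerM \<beta> \<alpha> y))"
    by (intro sums_diff sums_add sums_mult diffs_powser_times_x_sums M M' M'')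
  moreover have "(k * ?d k * y ^ k + \<alpha> * (?d k * y ^ k)) - (k * ?c k * y ^ k + \<beta> * (?c k * y ^ k)) = 0" for k
  proof -
    have "(k * ?d k * y ^ k + \<alpha> * (?d k * y ^ k)) - (k * ?c k * y ^ k + \<beta> * (?c k * y ^ k))
        = y ^ k * ((\<alpha> + k) * Suc k * ?c (Suc k) - (\<beta> + k) * ?c k)"
      by (simp add: diffs_def algebra_simps)
    then show ?thesis
      using kummer_coeff_recurrence[OF assms, of k \<beta>] by simp
  qed
  ultimately have "(\<lambda>k. 0) sums ((y * kummerM'' \<beta> \<alpha> y + \<alpha> * kummerM' \<beta> \<alpha> y) - (y * kummerM' \<beta> \<alpha> y + \<beta> * kummerM \<beta> \<alpha> y))"
    by (simp only:)
  from sums_unique2[OF this sums_zero] show ?thesis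
    by (simp add: algebra_simps)
qed

section \<open>The integral solution\<close>

definition kummer_kernel :: "real \<Rightarrow> real \<Rightarrow> nat \<Rightarrow> real \<Rightarrow> real \<Rightarrow> real" where
  "kummer_kernel \<beta> \<alpha> k y t = t ^ k * exp (y * t) * t powr (\<alpha> - \<beta> - 1) * (1 + t) powr (\<beta> - 1)"

definition kummer_moment :: "real \<Rightarrow> real \<Rightarrow> nat \<Rightarrow> real \<Rightarrow> real" where
  "kummer_moment \<beta> \<alpha> k y = integral {0<..} (kummer_kernel \<beta> \<alpha> k y)"

lemma kummerT_eq_kummer_moment: "kummerT \<beta> \<alpha> y = exp y / Gamma (\<alpha> - \<beta>) * kummer_moment \<beta> \<alpha> 0 y"
  by (simp add: kummerT_def kummer_moment_def kummer_kernel_def[abs_def])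

lemma continuous_on_kummer_kernel: "continuous_on {0<..} (kummer_kernel \<beta> \<alpha> k y)"
  unfolding kummer_kernel_def by (intro continuous_intros) auto

lemma kummer_kernel_nonneg: "t > 0 \<Longrightarrow> kummer_kernel \<beta> \<alpha> k y t \<ge> 0"
  by (simp add: kummer_kernel_def)

lemma kummer_kernel_mono:
  assumes "y \<le> y'" "t > 0"
  shows "kummer_kernel \<beta> \<alpha> k y t \<le> kummer_kernel \<beta> \<alpha> k y' t"
  using assms unfolding kummer_kernel_def by (intro mult_right_mono mult_left_mono) auto

lemma kummer_kernel_le:
  assumes "\<beta> \<le> 1" "t > 0"
  shows "kummer_kernel \<beta> \<alpha> k y t \<le> t powr (\<alpha> - \<beta> + k - 1) * exp (y * t)"
proof -
  have "kummer_kernel \<beta> \<alpha> k y t = t powr (\<alpha> - \<beta> + k - 1) * exp (y * t) * (1 + t) powr (\<beta> - 1)"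
    using assms by (simp add: kummer_kernel_def powr_realpow[symmetric] powr_add[symmetric] algebra_simps)
  also have "\<dots> \<le> t powr (\<alpha> - \<beta> + k - 1) * exp (y * t) * 1"
    using assms powr_mono[of "\<beta> - 1" 0 "1 + t"] by (intro mult_left_mono) auto
  finally show ?thesis by simp
qed

lemma kummer_kernel_absolutely_integrable:
  assumes "\<beta> < \<alpha>" "\<beta> \<le> 1" "y < 0"
  shows "kummer_kernel \<beta> \<alpha> k y absolutely_integrable_on {0<..}"
proof (rule measurable_bounded_by_integrable_imp_absolutely_integrable)
  show "kummer_kernel \<beta> \<alpha> k y \<in> borel_measurable (lebesgue_on {0<..})"
    by (intro continuous_imp_measurable_on_sets_lebesgue continuous_on_kummer_kernel) auto
  show "(\<lambda>t. t powr (\<alpha> - \<beta> + k - 1) * exp (- (- y) * t)) integrable_on {0<..}"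
    using Gamma_integral_real_scaled[of "\<alpha> - \<beta> + k" "- y"] assms by auto
  show "norm (kummer_kernel \<beta> \<alpha> k y t) \<le> t powr (\<alpha> - \<beta> + k - 1) * exp (- (- y) * t)"
    if "t \<in> {0<..}" for t
    using that kummer_kernel_le[OF assms(2), of t] kummer_kernel_nonneg[of t] by simp
qed auto

lemma kummer_kernel_integrable:
  "\<beta> < \<alpha> \<Longrightarrow> \<beta> \<le> 1 \<Longrightarrow> y < 0 \<Longrightarrow> kummer_kernel \<beta> \<alpha> k y integrable_on {0<..}"
  using kummer_kernel_absolutely_integrable set_lebesgue_integral_eq_integral(1) by blast

lemma has_real_derivative_kummer_moment:
  assumes "\<beta> < \<alpha>" "\<beta> \<le> 1" "y < 0"
  shows "(kummer_moment \<beta> \<alpha> k has_real_derivative kummer_moment \<beta> \<alpha> (Suc k) y) (at y)"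
  unfolding kummer_moment_def
proof (rule has_real_derivative_integral_dominated)
  show "- y / 2 > 0" using assms by simp
  show "kummer_kernel \<beta> \<alpha> k u integrable_on {0<..}" if "u \<in> ball y (- y / 2)" for u
    using that assms by (intro kummer_kernel_integrable) (auto simp: dist_real_def)
  show "((\<lambda>u. kummer_kernel \<beta> \<alpha> k u t) has_real_derivative kummer_kernel \<beta> \<alpha> (Suc k) u t) (at u)" for u t
    unfolding kummer_kernel_def by (auto intro!: derivative_eq_intros simp: algebra_simps)
  show "\<bar>kummer_kernel \<beta> \<alpha> (Suc k) u t\<bar> \<le> kummer_kernel \<beta> \<alpha> (Suc k) (y / 2) t"
    if "u \<in> ball y (- y / 2)" "t \<in> {0<..}" for u t
    using that kummer_kernel_nonneg[of t] kummer_kernel_mono[of u "y / 2" t]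
    by (auto simp: dist_real_def)
  show "kummer_kernel \<beta> \<alpha> (Suc k) (y / 2) integrable_on {0<..}"
    using assms by (intro kummer_kernel_integrable) auto
qed

text \<open>Integration by parts: the integrand is the derivative of e^{yt} t^{\<alpha>-\<beta>} (1+t)^\<beta>,
  which vanishes at both ends.\<close>
lemma kummer_moment_recurrence:
  assumes "\<beta> < \<alpha>" "\<beta> \<le> 1" "y < 0"
  shows "y * (kummer_moment \<beta> \<alpha> 2 y + kummer_moment \<beta> \<alpha> 1 y) + \<alpha> * kummer_moment \<beta> \<alpha> 1 y
           + (\<alpha> - \<beta>) * kummer_moment \<beta> \<alpha> 0 y = 0"
proof -
  define K where "K k = kummer_kernel \<beta> \<alpha> k y" for k
  define f where "f t = y * K 2 t + y * K 1 t + \<alpha> * K 1 t + (\<alpha> - \<beta>) * K 0 t" for t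
  define F where "F t = exp (y * t) * t powr (\<alpha> - \<beta>) * (1 + t) powr \<beta>" for t
  have int: "K k integrable_on {0<..}" for k
    unfolding K_def using assms by (intro kummer_kernel_integrable) auto
  have "(f has_integral 0 - 0) {0<..}"
  proof (rule has_integral_greaterThan_0_FTC)
    show "(F has_real_derivative f t) (at t)" if "t > 0" for t
    proof -
      have "t powr (\<alpha> - \<beta>) = t * t powr (\<alpha> - \<beta> - 1)" "(1 + t) powr \<beta> = (1 + t) * (1 + t) powr (\<beta> - 1)"
        using that by (simp_all add: powr_mult_base)
      then show ?thesis
        unfolding F_def f_def K_def kummer_kernel_def using that
        by (auto intro!: derivative_eq_intros simp: algebra_simps power2_eq_square)
    qed
    show "continuous_on {0<..} f"
      unfolding f_def K_def by (intro continuous_intros continuous_on_kummer_kernel)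
    show "f absolutely_integrable_on {0<..}"
      unfolding f_def K_def using assms
      by (intro set_integral_add set_integrable_mult_right kummer_kernel_absolutely_integrable) auto
    show "(F \<longlongrightarrow> 0) (at_right 0)"
      unfolding F_def using \<open>\<beta> < \<alpha>\<close> by (subst (asm) diff_gt_0_iff_gt[symmetric]) real_asymp
    show "(F \<longlongrightarrow> 0) at_top"
      unfolding F_def using \<open>\<beta> < \<alpha>\<close> \<open>y < 0\<close> by (subst (asm) diff_gt_0_iff_gt[symmetric]) real_asymp
  qed
  then have "integral {0<..} f = 0"
    by (simp add: integral_unique)
  moreover have "integral {0<..} f = y * kummer_moment \<beta> \<alpha> 2 y + y * kummer_moment \<beta> \<alpha> 1 y
      + \<alpha> * kummer_moment \<beta> \<alpha> 1 y + (\<alpha> - \<beta>) * kummer_moment \<beta> \<alpha> 0 y"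
    unfolding f_def kummer_moment_def K_def[symmetric]
    by (simp add: integral_add int integrable_add integrable_on_mult_right del: integral_mult_right) simp
  ultimately show ?thesis
    by (simp add: algebra_simps)
qed

definition kummerT' :: "real \<Rightarrow> real \<Rightarrow> real \<Rightarrow> real" where
  "kummerT' \<beta> \<alpha> y = exp y / Gamma (\<alpha> - \<beta>) * (kummer_moment \<beta> \<alpha> 0 y + kummer_moment \<beta> \<alpha> 1 y)"

definition kummerT'' :: "real \<Rightarrow> real \<Rightarrow> real \<Rightarrow> real" where
  "kummerT'' \<beta> \<alpha> y = exp y / Gamma (\<alpha> - \<beta>) *
     (kummer_moment \<beta> \<alpha> 0 y + 2 * kummer_moment \<beta> \<alpha> 1 y + kummer_moment \<beta> \<alpha> 2 y)"

lemma has_real_derivative_kummerT: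
  assumes "\<beta> < \<alpha>" "\<beta> \<le> 1" "y < 0"
  shows "(kummerT \<beta> \<alpha> has_real_derivative kummerT' \<beta> \<alpha> y) (at y)"
proof -
  have "Gamma (\<alpha> - \<beta>) > 0"
    using assms by simp
  then show ?thesis
    unfolding kummerT_eq_kummer_moment[abs_def] kummerT'_def
    by (auto intro!: derivative_eq_intros has_real_derivative_kummer_moment[OF assms]
        simp: field_simps)
qed

lemma has_real_derivative_kummerT':
  assumes "\<beta> < \<alpha>" "\<beta> \<le> 1" "y < 0"
  shows "(kummerT' \<beta> \<alpha> has_real_derivative kummerT'' \<beta> \<alpha> y) (at y)"
proof -
  have "Gamma (\<alpha> - \<beta>) > 0"
    using assms by simp
  then show ?thesis
    unfolding kummerT'_def[abs_def] kummerT''_def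
    by (auto intro!: derivative_eq_intros has_real_derivative_kummer_moment[OF assms]
        simp: field_simps numeral_2_eq_2)
qed

lemma kummerT_ode:
  assumes "\<beta> < \<alpha>" "\<beta> \<le> 1" "y < 0"
  shows "y * kummerT'' \<beta> \<alpha> y + (\<alpha> - y) * kummerT' \<beta> \<alpha> y = \<beta> * kummerT \<beta> \<alpha> y"
proof -
  define c where "c = exp y / Gamma (\<alpha> - \<beta>)"
  have "y * kummerT'' \<beta> \<alpha> y + (\<alpha> - y) * kummerT' \<beta> \<alpha> y - \<beta> * kummerT \<beta> \<alpha> y
      = c * (y * (kummer_moment \<beta> \<alpha> 2 y + kummer_moment \<beta> \<alpha> 1 y)
          + \<alpha> * kummer_moment \<beta> \<alpha> 1 y + (\<alpha> - \<beta>) * kummer_moment \<beta> \<alpha> 0 y)"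
    unfolding kummerT''_def kummerT'_def kummerT_eq_kummer_moment c_def[symmetric]
    by (simp add: algebra_simps)
  then show ?thesis
    using kummer_moment_recurrence[OF assms] by simp
qed

section \<open>The Wronskian\<close>

text \<open>Abel's identity: (-y)^\<alpha> e^{-y} is the integrating factor of y W' = -(\<alpha> - y) W.\<close>
lemma kummer_equation_wronskian_constant:
  fixes u u' u'' v v' v'' :: "real \<Rightarrow> real" and \<alpha> \<beta> :: real
  assumes u: "\<And>y. y < 0 \<Longrightarrow> (u has_real_derivative u' y) (at y)"
      "\<And>y. y < 0 \<Longrightarrow> (u' has_real_derivative u'' y) (at y)"
    and v: "\<And>y. y < 0 \<Longrightarrow> (v has_real_derivative v' y) (at y)"
      "\<And>y. y < 0 \<Longrightarrow> (v' has_real_derivative v'' y) (at y)"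
    and u_ode: "\<And>y. y < 0 \<Longrightarrow> y * u'' y + (\<alpha> - y) * u' y = \<beta> * u y"
    and v_ode: "\<And>y. y < 0 \<Longrightarrow> y * v'' y + (\<alpha> - y) * v' y = \<beta> * v y"
  obtains c where "\<And>y. y < 0 \<Longrightarrow> (u y * v' y - u' y * v y) * (- y) powr \<alpha> * exp (- y) = c"
proof -
  define W where "W y = u y * v' y - u' y * v y" for y
  define V where "V y = W y * (- y) powr \<alpha> * exp (- y)" for y
  have "(V has_real_derivative 0) (at y)" if y: "y < 0" for y
  proof -
    define W' where "W' = u y * v'' y - u'' y * v y"
    have W': "(W has_real_derivative W') (at y)"
      unfolding W_def W'_def using y by (auto intro!: derivative_eq_intros u v)
    have abel: "y * W y - y * W' - \<alpha> * W y = 0"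
      using u_ode[OF y] v_ode[OF y] unfolding W_def W'_def by algebra
    have "(- y) powr \<alpha> = - y * (- y) powr (\<alpha> - 1)"
      using y powr_mult_base[of "- y" "\<alpha> - 1"] by simp
    then have "W' * (- y) powr \<alpha> * exp (- y) - W y * (\<alpha> * (- y) powr (\<alpha> - 1)) * exp (- y)
          - W y * (- y) powr \<alpha> * exp (- y)
        = exp (- y) * (- y) powr (\<alpha> - 1) * (y * W y - y * W' - \<alpha> * W y)"
      by (simp add: algebra_simps)
    also have "\<dots> = 0"
      by (simp only: abel mult_zero_right)
    finally show ?thesis
      unfolding V_def using y
      by (auto intro!: derivative_eq_intros W' DERIV_chain2[where f = "\<lambda>u. u powr \<alpha>"]
          has_real_derivative_powr elim!: DERIV_cong simp: algebra_simps)
  qed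
  then have "V constant_on {..<0}"
    by (intro has_field_derivative_0_imp_constant_on) auto
  then show thesis
    using that unfolding constant_on_def V_def W_def by auto
qed

definition kummer_wronskian :: "real \<Rightarrow> real \<Rightarrow> real \<Rightarrow> real" where
  "kummer_wronskian \<beta> \<alpha> y = kummerM \<beta> \<alpha> y * kummerT' \<beta> \<alpha> y - kummerM' \<beta> \<alpha> y * kummerT \<beta> \<alpha> y"

text \<open>The error terms in the bounds below are of order x^{-\<alpha>/2}; this choice of exponent is
  where \<alpha> \<le> 2 is needed.\<close>
context
  fixes \<alpha> \<beta> :: real
  assumes \<alpha>: "0 < \<alpha>" "\<alpha> \<le> 2" and \<beta>: "\<beta> \<le> 0"
begin

lemma kummer_moment_0_bounds:
  assumes x: "x > 0"
  shows "0 \<le> kummer_moment \<beta> \<alpha> 0 (- x)" "kummer_moment \<beta> \<alpha> 0 (- x) \<le> Gamma (\<alpha> / 2) / x powr (\<alpha> / 2)"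
proof -
  have int: "kummer_kernel \<beta> \<alpha> 0 (- x) integrable_on {0<..}"
    using \<alpha> \<beta> x by (intro kummer_kernel_integrable) auto
  then show "0 \<le> kummer_moment \<beta> \<alpha> 0 (- x)"
    unfolding kummer_moment_def by (rule integral_nonneg) (simp add: kummer_kernel_nonneg)
  have Gamma: "((\<lambda>t. t powr (\<alpha> / 2 - 1) * exp (- x * t)) has_integral Gamma (\<alpha> / 2) / x powr (\<alpha> / 2)) {0<..}"
    using \<alpha> x by (intro Gamma_integral_real_scaled) auto
  have "kummer_kernel \<beta> \<alpha> 0 (- x) t \<le> t powr (\<alpha> / 2 - 1) * exp (- x * t)" if "t \<in> {0<..}" for t
  proof -
    have "kummer_kernel \<beta> \<alpha> 0 (- x) t \<le> exp (- x * t) * t powr (\<alpha> - \<beta> - 1) * t powr (\<beta> - \<alpha> / 2)"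
      unfolding kummer_kernel_def using that \<alpha> \<beta>
      by (simp add: mult_left_mono one_plus_powr_le_powr)
    also have "\<dots> = t powr (\<alpha> / 2 - 1) * exp (- x * t)"
      by (simp add: powr_add[symmetric])
    finally show ?thesis .
  qed
  then have "kummer_moment \<beta> \<alpha> 0 (- x) \<le> integral {0<..} (\<lambda>t. t powr (\<alpha> / 2 - 1) * exp (- x * t))"
    unfolding kummer_moment_def by (intro integral_le int has_integral_integrable[OF Gamma])
  then show "kummer_moment \<beta> \<alpha> 0 (- x) \<le> Gamma (\<alpha> / 2) / x powr (\<alpha> / 2)"
    unfolding integral_unique[OF Gamma] .
qed

lemma kummer_moment_1_bounds:
  assumes x: "x > 0"
  shows "kummer_moment \<beta> \<alpha> 1 (- x) \<le> Gamma \<alpha> / x powr \<alpha>"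
    "Gamma \<alpha> / x powr \<alpha> - (1 - \<beta>) * Gamma (\<alpha> / 2) / x powr (\<alpha> / 2) \<le> kummer_moment \<beta> \<alpha> 1 (- x)"
proof -
  have int: "kummer_kernel \<beta> \<alpha> 1 (- x) integrable_on {0<..}"
    using \<alpha> \<beta> x by (intro kummer_kernel_integrable) auto
  have Gamma: "((\<lambda>t. t powr (\<alpha> - 1) * exp (- x * t)) has_integral Gamma \<alpha> / x powr \<alpha>) {0<..}"
    using \<alpha> x by (intro Gamma_integral_real_scaled) auto
  have Gamma_half: "((\<lambda>t. t powr (\<alpha> / 2 - 1) * exp (- x * t)) has_integral Gamma (\<alpha> / 2) / x powr (\<alpha> / 2)) {0<..}"
    using \<alpha> x by (intro Gamma_integral_real_scaled) auto
  have kernel: "kummer_kernel \<beta> \<alpha> 1 (- x) t = exp (- x * t) * t powr (\<alpha> - \<beta>) * (1 + t) powr (\<beta> - 1)"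
    if "t > 0" for t
    using that powr_mult_base[of t "\<alpha> - \<beta> - 1"] by (simp add: kummer_kernel_def)
  have "kummer_kernel \<beta> \<alpha> 1 (- x) t \<le> t powr (\<alpha> - 1) * exp (- x * t)" if "t \<in> {0<..}" for t
  proof -
    have "kummer_kernel \<beta> \<alpha> 1 (- x) t = exp (- x * t) * t powr (\<alpha> - \<beta>) * (1 + t) powr (\<beta> - 1)"
      using that by (intro kernel) simp
    also have "\<dots> \<le> exp (- x * t) * t powr (\<alpha> - \<beta>) * t powr (\<beta> - 1)"
      using that \<beta> by (intro mult_left_mono powr_mono2') auto
    also have "\<dots> = t powr (\<alpha> - 1) * exp (- x * t)"
      by (simp add: powr_add[symmetric])
    finally show ?thesis .
  qed
  then have "kummer_moment \<beta> \<alpha> 1 (- x) \<le> integral {0<..} (\<lambda>t. t powr (\<alpha> - 1) * exp (- x * t))"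
    unfolding kummer_moment_def by (intro integral_le int has_integral_integrable[OF Gamma])
  then show "kummer_moment \<beta> \<alpha> 1 (- x) \<le> Gamma \<alpha> / x powr \<alpha>"
    unfolding integral_unique[OF Gamma] .
  have "t powr (\<alpha> - 1) * exp (- x * t) - (1 - \<beta>) * (t powr (\<alpha> / 2 - 1) * exp (- x * t))
      \<le> kummer_kernel \<beta> \<alpha> 1 (- x) t" if "t \<in> {0<..}" for t
  proof -
    have "t powr (\<alpha> - 1) * exp (- x * t) - kummer_kernel \<beta> \<alpha> 1 (- x) t
        = exp (- x * t) * t powr (\<alpha> - \<beta>) * (t powr (\<beta> - 1) - (1 + t) powr (\<beta> - 1))"
      using that by (subst kernel) (auto simp: algebra_simps powr_add[symmetric])
    also have "\<dots> \<le> exp (- x * t) * t powr (\<alpha> - \<beta>) * ((1 - \<beta>) * t powr (\<beta> - 1 - \<alpha> / 2))"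
      using that \<alpha> \<beta> powr_diff_one_plus_powr_le[of "\<beta> - 1" "\<beta> - 1 - \<alpha> / 2" t]
      by (intro mult_left_mono) auto
    also have "\<dots> = (1 - \<beta>) * (t powr (\<alpha> / 2 - 1) * exp (- x * t))"
      by (simp add: powr_add[symmetric] algebra_simps)
    finally show ?thesis
      by simp
  qed
  moreover have lower: "((\<lambda>t. t powr (\<alpha> - 1) * exp (- x * t) - (1 - \<beta>) * (t powr (\<alpha> / 2 - 1) * exp (- x * t)))
      has_integral Gamma \<alpha> / x powr \<alpha> - (1 - \<beta>) * (Gamma (\<alpha> / 2) / x powr (\<alpha> / 2))) {0<..}"
    by (intro has_integral_diff has_integral_mult_right Gamma Gamma_half)
  ultimately have "integral {0<..} (\<lambda>t. t powr (\<alpha> - 1) * exp (- x * t) - (1 - \<beta>) * (t powr (\<alpha> / 2 - 1) * exp (- x * t)))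
      \<le> kummer_moment \<beta> \<alpha> 1 (- x)"
    unfolding kummer_moment_def by (intro integral_le int has_integral_integrable[OF lower])
  then show "Gamma \<alpha> / x powr \<alpha> - (1 - \<beta>) * Gamma (\<alpha> / 2) / x powr (\<alpha> / 2) \<le> kummer_moment \<beta> \<alpha> 1 (- x)"
    unfolding integral_unique[OF lower] by simp
qed

lemma tendsto_kummer_moment_0: "((\<lambda>y. (- y) powr \<alpha> * kummer_moment \<beta> \<alpha> 0 y) \<longlongrightarrow> 0) (at_left 0)"
proof -
  have "((\<lambda>x. x powr \<alpha> * kummer_moment \<beta> \<alpha> 0 (- x)) \<longlongrightarrow> 0) (at_right 0)"
  proof (rule tendsto_sandwich[of "\<lambda>_. 0" _ _ "\<lambda>x. Gamma (\<alpha> / 2) * x powr (\<alpha> / 2)"])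
    show "\<forall>\<^sub>F x in at_right 0. 0 \<le> x powr \<alpha> * kummer_moment \<beta> \<alpha> 0 (- x)"
      using eventually_at_right_less[of 0] by eventually_elim (simp add: kummer_moment_0_bounds)
    show "\<forall>\<^sub>F x in at_right 0. x powr \<alpha> * kummer_moment \<beta> \<alpha> 0 (- x) \<le> Gamma (\<alpha> / 2) * x powr (\<alpha> / 2)"
      using eventually_at_right_less[of 0]
    proof eventually_elim
      case (elim x)
      then have "x powr \<alpha> * kummer_moment \<beta> \<alpha> 0 (- x) \<le> x powr \<alpha> * (Gamma (\<alpha> / 2) / x powr (\<alpha> / 2))"
        by (intro mult_left_mono kummer_moment_0_bounds) auto
      then show ?case
        unfolding powr_mult_divide_powr_half[OF elim] .
    qed
    show "((\<lambda>x. Gamma (\<alpha> / 2) * x powr (\<alpha> / 2)) \<longlongrightarrow> 0) (at_right 0)"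
      using \<alpha> by real_asymp
  qed simp
  then show ?thesis
    unfolding filterlim_at_left_to_right[of _ _ 0] by simp
qed

lemma tendsto_kummer_moment_1: "((\<lambda>y. (- y) powr \<alpha> * kummer_moment \<beta> \<alpha> 1 y) \<longlongrightarrow> Gamma \<alpha>) (at_left 0)"
proof -
  have "((\<lambda>x. x powr \<alpha> * kummer_moment \<beta> \<alpha> 1 (- x)) \<longlongrightarrow> Gamma \<alpha>) (at_right 0)"
  proof (rule tendsto_sandwich[of "\<lambda>x. Gamma \<alpha> - (1 - \<beta>) * Gamma (\<alpha> / 2) * x powr (\<alpha> / 2)" _ _ "\<lambda>_. Gamma \<alpha>"])
    show "\<forall>\<^sub>F x in at_right 0. Gamma \<alpha> - (1 - \<beta>) * Gamma (\<alpha> / 2) * x powr (\<alpha> / 2)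
        \<le> x powr \<alpha> * kummer_moment \<beta> \<alpha> 1 (- x)"
      using eventually_at_right_less[of 0]
    proof eventually_elim
      case (elim x)
      then have "x powr \<alpha> * (Gamma \<alpha> / x powr \<alpha> - (1 - \<beta>) * Gamma (\<alpha> / 2) / x powr (\<alpha> / 2))
          \<le> x powr \<alpha> * kummer_moment \<beta> \<alpha> 1 (- x)"
        by (intro mult_left_mono kummer_moment_1_bounds) auto
      then show ?case
        using elim unfolding right_diff_distrib powr_mult_divide_powr_half[OF elim] by simp
    qed
    show "\<forall>\<^sub>F x in at_right 0. x powr \<alpha> * kummer_moment \<beta> \<alpha> 1 (- x) \<le> Gamma \<alpha>"
      using eventually_at_right_less[of 0]
    proof eventually_elim
      case (elim x)
      then have "x powr \<alpha> * kummer_moment \<beta> \<alpha> 1 (- x) \<le> x powr \<alpha> * (Gamma \<alpha> / x powr \<alpha>)"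
        by (intro mult_left_mono kummer_moment_1_bounds) auto
      then show ?case
        using elim by simp
    qed
    show "((\<lambda>x. Gamma \<alpha> - (1 - \<beta>) * Gamma (\<alpha> / 2) * x powr (\<alpha> / 2)) \<longlongrightarrow> Gamma \<alpha>) (at_right 0)"
      using \<alpha> by real_asymp
  qed simp
  then show ?thesis
    unfolding filterlim_at_left_to_right[of _ _ 0] by simp
qed

lemma Gamma_alpha_minus_beta_nonzero: "Gamma (\<alpha> - \<beta>) \<noteq> 0"
proof -
  have "Gamma (\<alpha> - \<beta>) > 0"
    using \<alpha> \<beta> by simp
  then show ?thesis
    by linarith
qed

lemma tendsto_kummer_wronskian_scaled:
  "((\<lambda>y. kummer_wronskian \<beta> \<alpha> y * (- y) powr \<alpha> * exp (- y)) \<longlongrightarrow> Gamma \<alpha> / Gamma (\<alpha> - \<beta>)) (at_left 0)"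
proof -
  have "isCont (kummerM \<beta> \<alpha>) 0" "isCont (kummerM' \<beta> \<alpha>) 0"
    using \<alpha> by (auto intro: DERIV_isCont has_real_derivative_kummerM has_real_derivative_kummerM')
  then have M: "(kummerM \<beta> \<alpha> \<longlongrightarrow> 1) (at_left 0)" "(kummerM' \<beta> \<alpha> \<longlongrightarrow> kummerM' \<beta> \<alpha> 0) (at_left 0)"
    by (auto simp: isCont_def filterlim_at_split kummerM_at_0)
  have "((\<lambda>y. (kummerM \<beta> \<alpha> y * ((- y) powr \<alpha> * kummer_moment \<beta> \<alpha> 0 y + (- y) powr \<alpha> * kummer_moment \<beta> \<alpha> 1 y)
        - kummerM' \<beta> \<alpha> y * ((- y) powr \<alpha> * kummer_moment \<beta> \<alpha> 0 y)) / Gamma (\<alpha> - \<beta>))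
      \<longlongrightarrow> (1 * (0 + Gamma \<alpha>) - kummerM' \<beta> \<alpha> 0 * 0) / Gamma (\<alpha> - \<beta>)) (at_left 0)"
    by (intro tendsto_intros M tendsto_kummer_moment_0 tendsto_kummer_moment_1 Gamma_alpha_minus_beta_nonzero)
  moreover have "\<forall>\<^sub>F y in at_left 0. (kummerM \<beta> \<alpha> y * ((- y) powr \<alpha> * kummer_moment \<beta> \<alpha> 0 y
        + (- y) powr \<alpha> * kummer_moment \<beta> \<alpha> 1 y) - kummerM' \<beta> \<alpha> y * ((- y) powr \<alpha> * kummer_moment \<beta> \<alpha> 0 y))
        / Gamma (\<alpha> - \<beta>) = kummer_wronskian \<beta> \<alpha> y * (- y) powr \<alpha> * exp (- y)"
    using Gamma_alpha_minus_beta_nonzero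
    by (simp add: kummer_wronskian_def kummerT'_def kummerT_eq_kummer_moment exp_minus field_simps)
  ultimately show ?thesis
    by (simp add: tendsto_cong)
qed

lemma kummer_wronskian_eq:
  assumes "y < 0"
  shows "kummer_wronskian \<beta> \<alpha> y = Gamma \<alpha> / Gamma (\<alpha> - \<beta>) * (- y) powr (- \<alpha>) * exp y"
proof -
  have "\<beta> < \<alpha>" "\<beta> \<le> 1"
    using \<alpha> \<beta> by auto
  obtain c where c: "\<And>y. y < 0 \<Longrightarrow> kummer_wronskian \<beta> \<alpha> y * (- y) powr \<alpha> * exp (- y) = c"
    unfolding kummer_wronskian_def
    by (rule kummer_equation_wronskian_constant[of "kummerM \<beta> \<alpha>" "kummerM' \<beta> \<alpha>" "kummerM'' \<beta> \<alpha>"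
          "kummerT \<beta> \<alpha>" "kummerT' \<beta> \<alpha>" "kummerT'' \<beta> \<alpha>" \<alpha> \<beta>])
       (use \<alpha> \<open>\<beta> < \<alpha>\<close> \<open>\<beta> \<le> 1\<close> in \<open>auto intro: has_real_derivative_kummerM has_real_derivative_kummerM'
          has_real_derivative_kummerT has_real_derivative_kummerT' kummerM_ode kummerT_ode\<close>)
  have "\<forall>\<^sub>F y in at_left 0. kummer_wronskian \<beta> \<alpha> y * (- y) powr \<alpha> * exp (- y) = c"
    by (auto simp: eventually_at_left_field c intro: exI[of _ "-1"])
  from tendsto_cong[OF this] have "((\<lambda>_. c) \<longlongrightarrow> Gamma \<alpha> / Gamma (\<alpha> - \<beta>)) (at_left (0::real))"
    using tendsto_kummer_wronskian_scaled by simp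
  then have "c = Gamma \<alpha> / Gamma (\<alpha> - \<beta>)"
    by (intro tendsto_unique[of "at_left (0::real)"]) auto
  moreover have "(- y) powr \<alpha> \<noteq> 0"
    using assms by simp
  ultimately show ?thesis
    using c[OF assms] Gamma_alpha_minus_beta_nonzero by (simp add: powr_minus exp_minus field_simps)
qed

end

section \<open>The substitution y = -j z^n\<close>

lemma wronskian_mult_compose:
  fixes E g u v :: "real \<Rightarrow> real"
  assumes E: "(E has_real_derivative E') (at z)" and g: "(g has_real_derivative g') (at z)"
    and u: "(u has_real_derivative u') (at (g z))" and v: "(v has_real_derivative v') (at (g z))"
  shows "E z * u (g z) * deriv (\<lambda>z. E z * v (g z)) z - deriv (\<lambda>z. E z * u (g z)) z * (E z * v (g z))
       = E z ^ 2 * g' * (u (g z) * v' - u' * v (g z))"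
proof -
  have "deriv (\<lambda>z. E z * u (g z)) z = E' * u (g z) + u' * g' * E z"
    by (intro DERIV_imp_deriv DERIV_mult E DERIV_chain2[OF u g])
  moreover have "deriv (\<lambda>z. E z * v (g z)) z = E' * v (g z) + v' * g' * E z"
    by (intro DERIV_imp_deriv DERIV_mult E DERIV_chain2[OF v g])
  ultimately show ?thesis
    by (simp add: algebra_simps power2_eq_square)
qed

lemma mult_power_mult_powr_eq:
  fixes c z :: real and n :: nat
  assumes "c > 0" "z > 0" "n > 0"
  shows "c * z ^ (n - 1) * (c * z ^ n) powr (- (1 - 1 / n)) = c powr (1 / n)"
proof -
  have "(c * z ^ n) powr (- (1 - 1 / n)) = c powr (1 / n - 1) * (z powr real n) powr (1 / n - 1)"
    using assms by (simp add: powr_mult powr_realpow)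
  also have "(z powr real n) powr (1 / n - 1) = z powr (1 - real n)"
    using assms by (simp add: powr_powr algebra_simps)
  finally have eq: "(c * z ^ n) powr (- (1 - 1 / n)) = c powr (1 / n - 1) * z powr (1 - real n)" .
  have "c * c powr (1 / n - 1) = c powr (1 / n)"
    using assms powr_mult_base[of c "1 / n - 1"] by simp
  moreover have "z ^ (n - 1) * z powr (1 - real n) = 1"
    using assms by (simp add: powr_realpow[symmetric] of_nat_diff powr_add[symmetric])
  moreover have "c * z ^ (n - 1) * (c * z ^ n) powr (- (1 - 1 / n))
      = (c * c powr (1 / n - 1)) * (z ^ (n - 1) * z powr (1 - real n))"
    unfolding eq by (simp only: ac_simps)
  ultimately show ?thesis
    by (simp only: mult_1_right)
qed

lemma Gamma_minus_inverse_nat: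
  assumes "n \<ge> 2"
  shows "Gamma (- 1 / real n) = - real n * Gamma (1 - 1 / real n)"
proof -
  have "- 1 / real n \<notin> \<int>\<^sub>\<le>\<^sub>0"
  proof
    assume "- 1 / real n \<in> \<int>\<^sub>\<le>\<^sub>0"
    then obtain k :: nat where "- 1 / real n = - real k"
      by (auto elim!: nonpos_Ints_cases')
    then have "real k * real n = 1"
      using assms by (simp add: field_simps)
    then have "k * n = 1"
      by (metis of_nat_1 of_nat_eq_iff of_nat_mult)
    then show False
      using assms by simp
  qed
  then have "Gamma (- 1 / real n + 1) = - 1 / real n * Gamma (- 1 / real n)"
    by (rule Gamma_plus1)
  moreover have "- 1 / real n + 1 = 1 - 1 / real n"
    by simp
  ultimately show ?thesis
    using assms by (simp add: field_simps)
qed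

lemma kummer_parameter_nonpos:
  fixes n j :: nat and lam :: real
  assumes "n \<ge> 2" "j > 0" "lam \<ge> real (n - 1) * real j / 2"
  shows "(1 - 1 / real n) / 2 - lam / (real j * real n) \<le> 0"
proof -
  have "(1 - 1 / real n) / 2 = (real n - 1) * real j / 2 / (real j * real n)"
    using assms by (simp add: field_simps)
  also have "\<dots> \<le> lam / (real j * real n)"
    using assms by (intro divide_right_mono) (auto simp: of_nat_diff)
  finally show ?thesis
    by simp
qed

theorem proposition4p1:
  fixes n j :: nat and lam :: real
  assumes "n \<ge> 2" and "j > 0"
    and "lam \<ge> real (n - 1) * real j / 2"
  defines "G \<equiv> (\<lambda>z::real. exp (real j * z ^ n / 2) * kummerM ((1 - 1 / real n) / 2 - lam / (real j * real n)) (1 - 1 / real n) (- real j * z ^ n))"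
    and "D \<equiv> (\<lambda>z::real. exp (real j * z ^ n / 2) * kummerT ((1 - 1 / real n) / 2 - lam / (real j * real n)) (1 - 1 / real n) (- real j * z ^ n))"
  shows "\<forall>z>0. G z * deriv D z - deriv G z * D z
           = Gamma ((1 - 1 / real n) - 1) / Gamma ((1 - 1 / real n) - ((1 - 1 / real n) / 2 - lam / (real j * real n))) * real j powr (1 / real n)"
proof (intro allI impI)
  fix z :: real assume "z > 0"
  define \<alpha> where "\<alpha> = 1 - 1 / real n"
  define \<beta> where "\<beta> = \<alpha> / 2 - lam / (real j * real n)"
  have \<alpha>: "0 < \<alpha>" "\<alpha> \<le> 2"
    using \<open>n \<ge> 2\<close> by (auto simp: \<alpha>_def field_simps)
  have \<beta>: "\<beta> \<le> 0"
    using kummer_parameter_nonpos[OF assms(1-3)] by (simp add: \<alpha>_def \<beta>_def)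
  have y: "- real j * z ^ n < 0"
    using \<open>j > 0\<close> \<open>z > 0\<close> by simp
  have "G z * deriv D z - deriv G z * D z
      = exp (real j * z ^ n / 2) ^ 2 * (- real j * (real n * z ^ (n - 1))) * kummer_wronskian \<beta> \<alpha> (- real j * z ^ n)"
    unfolding G_def D_def \<alpha>_def[symmetric] \<beta>_def[symmetric] kummer_wronskian_def
    using \<alpha> \<beta> y by (intro wronskian_mult_compose)
      (auto intro!: derivative_eq_intros has_real_derivative_kummerM has_real_derivative_kummerT)
  also have "\<dots> = - real n * Gamma \<alpha> / Gamma (\<alpha> - \<beta>) * (real j * z ^ (n - 1) * (real j * z ^ n) powr (- \<alpha>))"
    using kummer_wronskian_eq[OF \<alpha> \<beta> y] by (simp add: exp_minus power2_eq_square field_simps flip: exp_add)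
  also have "\<dots> = Gamma (\<alpha> - 1) / Gamma (\<alpha> - \<beta>) * real j powr (1 / real n)"
    using mult_power_mult_powr_eq[of "real j" z n] Gamma_minus_inverse_nat[OF \<open>n \<ge> 2\<close>]
      \<open>j > 0\<close> \<open>z > 0\<close> \<open>n \<ge> 2\<close> by (simp add: \<alpha>_def)
  finally show "G z * deriv D z - deriv G z * D z
      = Gamma ((1 - 1 / real n) - 1) / Gamma ((1 - 1 / real n) - ((1 - 1 / real n) / 2 - lam / (real j * real n))) * real j powr (1 / real n)"
    by (simp only: \<alpha>_def \<beta>_def)
qed

end
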